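(* For every $n\ge 0$, the Wiener index of $S_n$ is \[ \d(S_n)=\frac{2n(2n+1)}{3}\binom{2n-1}{n}, \] and consequently $\d(S_n)\sim \frac{2}{3\sqrt{\pi}}\,4^n n^{3/2}$ as $n\to\infty$.
   Context: $S_n$ is the lattice (under inclusion) of order ideals of the shifted staircase poset $\{(i,j)\in\mathbb Z^2:1\le i\le j\le n\}$ with componentwise order; $|S_n|=2^n$. For a finite poset $Q$, $\d(Q)=\sum_{(p,q)\in Q\times Q}\d(p,q)$ where $\d(p,q)$ is the graph distance in the Hasse diagram of $Q$, summed over ordered pairs. Convention: $\binom{-1}{0}=1$. *)

theory Defs
  imports "HOL-Analysis.Analysis" "HOL-Library.Landau_Symbols"
begin

definition hasse_covers :: "'a set \<Rightarrow> ('a \<Rightarrow> 'a \<Rightarrow> bool) \<Rightarrow> 'a \<Rightarrow> 'a \<Rightarrow> bool" where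
  "hasse_covers Q le x y \<longleftrightarrow> x \<in> Q \<and> y \<in> Q \<and> le x y \<and> x \<noteq> y \<and>
     \<not> (\<exists>z\<in>Q. le x z \<and> le z y \<and> z \<noteq> x \<and> z \<noteq> y)"

definition hasse_adj :: "'a set \<Rightarrow> ('a \<Rightarrow> 'a \<Rightarrow> bool) \<Rightarrow> 'a \<Rightarrow> 'a \<Rightarrow> bool" where
  "hasse_adj Q le x y \<longleftrightarrow> hasse_covers Q le x y \<or> hasse_covers Q le y x"

definition hasse_walk :: "'a set \<Rightarrow> ('a \<Rightarrow> 'a \<Rightarrow> bool) \<Rightarrow> 'a \<Rightarrow> 'a \<Rightarrow> nat \<Rightarrow> bool" where
  "hasse_walk Q le x y k \<longleftrightarrow>
     (\<exists>f :: nat \<Rightarrow> 'a. f 0 = x \<and> f k = y \<and> (\<forall>i<k. hasse_adj Q le (f i) (f (Suc i))))"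

definition hasse_dist :: "'a set \<Rightarrow> ('a \<Rightarrow> 'a \<Rightarrow> bool) \<Rightarrow> 'a \<Rightarrow> 'a \<Rightarrow> nat" where
  "hasse_dist Q le x y = (LEAST k. hasse_walk Q le x y k)"

definition wiener :: "'a set \<Rightarrow> ('a \<Rightarrow> 'a \<Rightarrow> bool) \<Rightarrow> nat" where
  "wiener Q le = (\<Sum>(p, q)\<in>Q \<times> Q. hasse_dist Q le p q)"

definition shifted_staircase :: "nat \<Rightarrow> (nat \<times> nat) set" where
  "shifted_staircase n = {(i, j). 1 \<le> i \<and> i \<le> j \<and> j \<le> n}"

definition comp_le :: "nat \<times> nat \<Rightarrow> nat \<times> nat \<Rightarrow> bool" where
  "comp_le p q \<longleftrightarrow> fst p \<le> fst q \<and> snd p \<le> snd q"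

definition order_ideal :: "(nat \<times> nat) set \<Rightarrow> (nat \<times> nat) set \<Rightarrow> bool" where
  "order_ideal P I \<longleftrightarrow> I \<subseteq> P \<and> (\<forall>x\<in>I. \<forall>y\<in>P. comp_le y x \<longrightarrow> y \<in> I)"

definition S :: "nat \<Rightarrow> (nat \<times> nat) set set" where
  "S n = {I. order_ideal (shifted_staircase n) I}"

end

theory Submission
  imports Defs
begin

text \<open>
  In a lattice of order ideals, a shortest path in the Hasse diagram between two ideals adds or
  removes one element at a time, so the distance is the size of the symmetric difference.
  An ideal of the staircase of size n+1 is the one-column shift of an ideal K of size n together
  with an initial diagonal segment of length d(K) or d(K)+1, d(K) being the diagonal length of K.
  Distances therefore split into the distance of the underlying ideals plus the difference of the
  diagonal lengths, and summing over the four choices gives linear recurrences for the Wiener index,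
  for the total diagonal gap and for the number of pairs with a given diagonal gap. As d grows by
  0 or 1 at each step, the number of pairs with gap d is C(2n, n+d), and the recurrences solve in
  closed form. The asymptotics is that of the central binomial coefficient, via Gamma(1/2) = sqrt pi.
\<close>

section \<open>Hasse distance in lattices of order ideals\<close>

abbreviation ideals :: "(nat \<times> nat) set \<Rightarrow> (nat \<times> nat) set set" where
  "ideals P \<equiv> {I. order_ideal P I}"

text \<open>A strictly monotone rank for comp_le: level-extremal elements of a set are minimal
  resp. maximal in the product order.\<close>

definition level :: "nat \<times> nat \<Rightarrow> nat" where
  "level p = fst p + snd p"

lemma level_less: "comp_le y x \<Longrightarrow> y \<noteq> x \<Longrightarrow> level y < level x"
  by (cases x, cases y) (auto simp: comp_le_def level_def)

lemma ex_level_min: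
  assumes "A \<noteq> {}"
  shows "\<exists>x\<in>A. \<forall>y\<in>A. level x \<le> level y"
proof -
  obtain a where "a \<in> A" using assms by blast
  from ex_has_least_nat[of "\<lambda>x. x \<in> A", OF this, of level] show ?thesis by blast
qed

lemma ex_level_max:
  assumes "finite A" "A \<noteq> {}"
  shows "\<exists>x\<in>A. \<forall>y\<in>A. level y \<le> level x"
proof -
  have "Max (level ` A) \<in> level ` A" using assms by (intro Max_in) auto
  then obtain x where x: "x \<in> A" "level x = Max (level ` A)" by (rule imageE) simp
  have "level y \<le> level x" if "y \<in> A" for y
    unfolding x(2) using assms(1) that by (intro Max_ge) auto
  then show ?thesis using x(1) by blast
qed

lemma order_ideal_finite: "finite P \<Longrightarrow> order_ideal P I \<Longrightarrow> finite I"
  by (auto simp: order_ideal_def intro: finite_subset)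

lemma order_ideal_insert_min:
  assumes I: "order_ideal P I" and J: "order_ideal P J" and x: "x \<in> J - I"
    and min: "\<forall>y\<in>J - I. level x \<le> level y"
  shows "order_ideal P (insert x I)"
  unfolding order_ideal_def
proof (intro conjI ballI impI)
  show "insert x I \<subseteq> P" using I J x by (auto simp: order_ideal_def)
next
  fix a b assume a: "a \<in> insert x I" and b: "b \<in> P" and ba: "comp_le b a"
  show "b \<in> insert x I"
  proof (cases "a = x \<and> b \<noteq> x")
    case True
    then have "b \<in> J" using J x b ba by (auto simp: order_ideal_def)
    moreover have "level b < level x" using True ba level_less by blast
    ultimately show ?thesis using min by force
  next
    case False
    then show ?thesis using a I b ba by (auto simp: order_ideal_def)
  qed
qed

lemma order_ideal_remove_max:
  assumes I: "order_ideal P I" and J: "order_ideal P J" and x: "x \<in> I - J"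
    and max: "\<forall>y\<in>I - J. level y \<le> level x"
  shows "order_ideal P (I - {x})"
  unfolding order_ideal_def
proof (intro conjI ballI impI)
  show "I - {x} \<subseteq> P" using I by (auto simp: order_ideal_def)
next
  fix a b assume a: "a \<in> I - {x}" and b: "b \<in> P" and ba: "comp_le b a"
  have "b \<in> I" using I a b ba by (auto simp: order_ideal_def)
  moreover have "b \<noteq> x"
  proof
    assume "b = x"
    then have "a \<notin> J" using J x b ba by (auto simp: order_ideal_def)
    then have "level a \<le> level x" using max a by blast
    moreover have "level x < level a" using level_less \<open>b = x\<close> ba a by blast
    ultimately show False by simp
  qed
  ultimately show "b \<in> I - {x}" by blast
qed

lemma hasse_adj_mem: "hasse_adj Q le x y \<Longrightarrow> x \<in> Q \<and> y \<in> Q"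
  by (auto simp: hasse_adj_def hasse_covers_def)

lemma hasse_walk_0: "hasse_walk Q le x y 0 \<longleftrightarrow> x = y"
  by (auto simp: hasse_walk_def)

lemma hasse_walk_Suc:
  "hasse_walk Q le x z (Suc k) \<longleftrightarrow> (\<exists>y. hasse_adj Q le x y \<and> hasse_walk Q le y z k)"
proof
  assume "hasse_walk Q le x z (Suc k)"
  then obtain f where "f 0 = x" "f (Suc k) = z" "\<forall>i<Suc k. hasse_adj Q le (f i) (f (Suc i))"
    by (auto simp: hasse_walk_def)
  then have "hasse_adj Q le x (f 1) \<and> hasse_walk Q le (f 1) z k"
    unfolding hasse_walk_def by (auto intro!: exI[of _ "\<lambda>i. f (Suc i)"])
  then show "\<exists>y. hasse_adj Q le x y \<and> hasse_walk Q le y z k" by blast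
next
  assume "\<exists>y. hasse_adj Q le x y \<and> hasse_walk Q le y z k"
  then obtain y f where "hasse_adj Q le x y" "f 0 = y" "f k = z"
    "\<forall>i<k. hasse_adj Q le (f i) (f (Suc i))"
    by (auto simp: hasse_walk_def)
  then show "hasse_walk Q le x z (Suc k)"
    unfolding hasse_walk_def
    by (intro exI[of _ "\<lambda>i. if i = 0 then x else f (i - 1)"]) (auto simp: less_Suc_eq_0_disj)
qed

lemma hasse_covers_ideals_iff:
  "hasse_covers (ideals P) (\<subseteq>) I J \<longleftrightarrow>
     order_ideal P I \<and> order_ideal P J \<and> (\<exists>x. x \<notin> I \<and> J = insert x I)"
proof
  assume cov: "hasse_covers (ideals P) (\<subseteq>) I J"
  then have I: "order_ideal P I" and J: "order_ideal P J" and "I \<subset> J"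
    by (auto simp: hasse_covers_def)
  then obtain x where x: "x \<in> J - I" and min: "\<forall>y\<in>J - I. level x \<le> level y"
    using ex_level_min[of "J - I"] by blast
  have "order_ideal P (insert x I)" using order_ideal_insert_min[OF I J x min] .
  then have "J = insert x I" using cov x unfolding hasse_covers_def by blast
  then show "order_ideal P I \<and> order_ideal P J \<and> (\<exists>x. x \<notin> I \<and> J = insert x I)"
    using I J x by blast
next
  assume "order_ideal P I \<and> order_ideal P J \<and> (\<exists>x. x \<notin> I \<and> J = insert x I)"
  then show "hasse_covers (ideals P) (\<subseteq>) I J"
    unfolding hasse_covers_def by blast
qed

lemma hasse_adj_ideals_sym_diff:
  assumes "hasse_adj (ideals P) (\<subseteq>) I J"
  obtains x where "sym_diff I J = {x}"
  using assms unfolding hasse_adj_def hasse_covers_ideals_iff by blast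

lemma hasse_walk_ideals_card_le:
  assumes "finite P" and "hasse_walk (ideals P) (\<subseteq>) I J k"
    and "order_ideal P I" and "order_ideal P J"
  shows "card (sym_diff I J) \<le> k"
  using assms(2,3)
proof (induction k arbitrary: I)
  case 0
  then show ?case by (simp add: hasse_walk_0)
next
  case (Suc k)
  then obtain I' where adj: "hasse_adj (ideals P) (\<subseteq>) I I'"
    and walk: "hasse_walk (ideals P) (\<subseteq>) I' J k"
    by (auto simp: hasse_walk_Suc)
  obtain x where x: "sym_diff I I' = {x}" using adj by (rule hasse_adj_ideals_sym_diff)
  have I': "order_ideal P I'" using hasse_adj_mem[OF adj] by simp
  have fin: "finite (sym_diff I' J)"
    using order_ideal_finite[OF assms(1)] I' assms(4) by blast
  have "card (sym_diff I J) \<le> card (insert x (sym_diff I' J))"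
    using fin x by (intro card_mono) auto
  also have "\<dots> \<le> Suc (card (sym_diff I' J))" using fin by (simp add: card_insert_if)
  also have "\<dots> \<le> Suc k" using Suc.IH[OF walk I'] by simp
  finally show ?case .
qed

lemma ideals_step_toward:
  assumes P: "finite P" and I: "order_ideal P I" and J: "order_ideal P J" and "I \<noteq> J"
  obtains I' where "hasse_adj (ideals P) (\<subseteq>) I I'"
    and "Suc (card (sym_diff I' J)) = card (sym_diff I J)"
proof -
  have fin: "finite (sym_diff I J)" using order_ideal_finite[OF P] I J by blast
  obtain I' x where adj: "hasse_adj (ideals P) (\<subseteq>) I I'"
    and x: "x \<notin> sym_diff I' J" "sym_diff I J = insert x (sym_diff I' J)"
  proof (cases "I - J = {}")
    case False
    then obtain x where x: "x \<in> I - J" and max: "\<forall>y\<in>I - J. level y \<le> level x"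
      using ex_level_max[of "I - J"] order_ideal_finite[OF P I] by blast
    have "order_ideal P (I - {x})" using order_ideal_remove_max[OF I J x max] .
    then have "hasse_covers (ideals P) (\<subseteq>) (I - {x}) I"
      using I x unfolding hasse_covers_ideals_iff by blast
    then have "hasse_adj (ideals P) (\<subseteq>) I (I - {x})" by (simp add: hasse_adj_def)
    then show ?thesis using that[of "I - {x}" x] x by blast
  next
    case True
    then have "J - I \<noteq> {}" using \<open>I \<noteq> J\<close> by blast
    then obtain x where x: "x \<in> J - I" and min: "\<forall>y\<in>J - I. level x \<le> level y"
      using ex_level_min[of "J - I"] by blast
    have "order_ideal P (insert x I)" using order_ideal_insert_min[OF I J x min] .
    then have "hasse_adj (ideals P) (\<subseteq>) I (insert x I)"
      using I x unfolding hasse_adj_def hasse_covers_ideals_iff by blast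
    then show ?thesis using that[of "insert x I" x] x by blast
  qed
  then show ?thesis using that fin by simp
qed

lemma hasse_walk_ideals_sym_diff:
  assumes P: "finite P" and "order_ideal P I" and J: "order_ideal P J"
  shows "hasse_walk (ideals P) (\<subseteq>) I J (card (sym_diff I J))"
  using assms(2)
proof (induction "card (sym_diff I J)" arbitrary: I)
  case 0
  then have "I = J" using order_ideal_finite[OF P] J by auto
  then show ?case by (simp add: hasse_walk_0)
next
  case (Suc m)
  then have "I \<noteq> J" by auto
  obtain I' where adj: "hasse_adj (ideals P) (\<subseteq>) I I'"
    and card: "Suc (card (sym_diff I' J)) = card (sym_diff I J)"
    using ideals_step_toward[OF P Suc.prems J \<open>I \<noteq> J\<close>] .
  have "m = card (sym_diff I' J)" using Suc.hyps(2) card by simp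
  then have "hasse_walk (ideals P) (\<subseteq>) I' J m"
    using Suc.hyps(1)[of I'] hasse_adj_mem[OF adj] by simp
  then have "hasse_walk (ideals P) (\<subseteq>) I J (Suc m)" unfolding hasse_walk_Suc using adj by blast
  then show ?case using Suc.hyps(2) by simp
qed

lemma hasse_dist_ideals:
  assumes "finite P" "order_ideal P I" "order_ideal P J"
  shows "hasse_dist (ideals P) (\<subseteq>) I J = card (sym_diff I J)"
  unfolding hasse_dist_def
  using hasse_walk_ideals_sym_diff[OF assms] hasse_walk_ideals_card_le[OF assms(1) _ assms(2,3)]
  by (intro Least_equality) auto

lemma wiener_ideals:
  "finite P \<Longrightarrow> wiener (ideals P) (\<subseteq>) = (\<Sum>I\<in>ideals P. \<Sum>J\<in>ideals P. card (sym_diff I J))"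
  unfolding wiener_def sum.cartesian_product by (rule sum.cong) (auto simp: hasse_dist_ideals)

section \<open>Ideals of the staircase of size n+1\<close>

lemma mem_shifted_staircase [simp]:
  "(i, j) \<in> shifted_staircase n \<longleftrightarrow> 1 \<le> i \<and> i \<le> j \<and> j \<le> n"
  by (simp add: shifted_staircase_def)

lemma finite_shifted_staircase: "finite (shifted_staircase n)"
  by (rule finite_subset[of _ "{1..n} \<times> {1..n}"]) (auto simp: shifted_staircase_def)

lemma S_0: "S 0 = {{}}"
  by (auto simp: S_def order_ideal_def shifted_staircase_def)

lemma S_subset: "I \<in> S n \<Longrightarrow> I \<subseteq> shifted_staircase n"
  by (simp add: S_def order_ideal_def)

lemma S_downward:
  "I \<in> S n \<Longrightarrow> (a, b) \<in> I \<Longrightarrow> (c, d) \<in> shifted_staircase n \<Longrightarrow> c \<le> a \<Longrightarrow> d \<le> b \<Longrightarrow> (c, d) \<in> I"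
  by (fastforce simp: S_def order_ideal_def comp_le_def)

lemma S_intro:
  assumes "I \<subseteq> shifted_staircase n"
    and "\<And>a b c d. (a, b) \<in> I \<Longrightarrow> (c, d) \<in> shifted_staircase n \<Longrightarrow> c \<le> a \<Longrightarrow> d \<le> b \<Longrightarrow> (c, d) \<in> I"
  shows "I \<in> S n"
  using assms by (auto simp: S_def order_ideal_def comp_le_def)

lemma downward_closed_eq_atLeastAtMost:
  fixes A :: "nat set"
  assumes "finite A" "0 \<notin> A" "\<And>a b. a \<in> A \<Longrightarrow> 0 < b \<Longrightarrow> b \<le> a \<Longrightarrow> b \<in> A"
  shows "A = {1..card A}"
proof (cases "A = {}")
  case False
  have "A = {1..Max A}"
  proof
    show "A \<subseteq> {1..Max A}" using assms(1,2) Max_ge[OF assms(1)] by (auto simp: Suc_le_eq intro: gr0I)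
    show "{1..Max A} \<subseteq> A" using assms(3) Max_in[OF assms(1) False] by auto
  qed
  then show ?thesis by (metis card_atLeastAtMost diff_Suc_1)
qed simp

definition diag_len :: "(nat \<times> nat) set \<Rightarrow> nat" where
  "diag_len K = card {i. (i, i) \<in> K}"

lemma diag_eq_atLeastAtMost: "K \<in> S n \<Longrightarrow> {i. (i, i) \<in> K} = {1..diag_len K}"
  unfolding diag_len_def
proof (rule downward_closed_eq_atLeastAtMost)
  assume K: "K \<in> S n"
  show "finite {i. (i, i) \<in> K}"
    by (rule finite_subset[of _ "{1..n}"]) (use S_subset[OF K] in auto)
  show "0 \<notin> {i. (i, i) \<in> K}" using S_subset[OF K] by auto
  show "b \<in> {i. (i, i) \<in> K}" if "a \<in> {i. (i, i) \<in> K}" "0 < b" "b \<le> a" for a b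
    using that S_downward[OF K, of a a b b] S_subset[OF K] by auto
qed

lemma diag_mem_iff: "K \<in> S n \<Longrightarrow> (i, i) \<in> K \<longleftrightarrow> 1 \<le> i \<and> i \<le> diag_len K"
  by (drule diag_eq_atLeastAtMost) (auto simp: set_eq_iff)

lemma diag_len_le: "K \<in> S n \<Longrightarrow> diag_len K \<le> n"
  using diag_mem_iff[of K n "diag_len K"] S_subset[of K n] by (cases "diag_len K = 0") auto

definition shift :: "(nat \<times> nat) set \<Rightarrow> (nat \<times> nat) set" where
  "shift K = (\<lambda>(i, j). (i, Suc j)) ` K"

definition diag_segment :: "nat \<Rightarrow> (nat \<times> nat) set" where
  "diag_segment m = (\<lambda>i. (i, i)) ` {1..m}"

definition extend :: "(nat \<times> nat) set \<Rightarrow> nat \<Rightarrow> (nat \<times> nat) set" where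
  "extend K e = shift K \<union> diag_segment (diag_len K + e)"

definition unshift :: "(nat \<times> nat) set \<Rightarrow> (nat \<times> nat) set" where
  "unshift I = {(i, j). i \<le> j \<and> (i, Suc j) \<in> I}"

lemma mem_extend:
  assumes "K \<in> S n"
  shows "(a, b) \<in> extend K e \<longleftrightarrow> a < b \<and> (a, b - 1) \<in> K \<or> a = b \<and> 1 \<le> a \<and> a \<le> diag_len K + e"
  using S_subset[OF assms] by (force simp: extend_def shift_def diag_segment_def)

lemma extend_subset:
  assumes K: "K \<in> S n" and e: "e \<le> 1"
  shows "extend K e \<subseteq> shifted_staircase (Suc n)"
proof
  fix p assume "p \<in> extend K e"
  then obtain a b where p: "p = (a, b)"
    and "a < b \<and> (a, b - 1) \<in> K \<or> a = b \<and> 1 \<le> a \<and> a \<le> diag_len K + e"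
    using mem_extend[OF K] by (cases p) blast
  then show "p \<in> shifted_staircase (Suc n)"
    using subsetD[OF S_subset[OF K], of "(a, b - 1)"] diag_len_le[OF K] e by auto
qed

lemma extend_S:
  assumes K: "K \<in> S n" and e: "e \<le> 1"
  shows "extend K e \<in> S (Suc n)"
proof (rule S_intro)
  show "extend K e \<subseteq> shifted_staircase (Suc n)" using extend_subset[OF K e] .
  note diag = diag_mem_iff[OF K]
  have K_stair: "1 \<le> i \<and> i \<le> j \<and> j \<le> n" if "(i, j) \<in> K" for i j
    using S_subset[OF K] that by auto
  fix a b c d assume ab: "(a, b) \<in> extend K e" and cd: "(c, d) \<in> shifted_staircase (Suc n)"
    and le: "c \<le> a" "d \<le> b"
  have ab_cases: "a < b \<and> (a, b - 1) \<in> K \<or> a = b \<and> 1 \<le> a \<and> a \<le> diag_len K + e"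
    using ab mem_extend[OF K] by blast
  have "(c, d - 1) \<in> K" if "c < d"
    using ab_cases
  proof (elim disjE conjE)
    assume ab': "(a, b - 1) \<in> K"
    have "(c, d - 1) \<in> shifted_staircase n" using cd that le K_stair[OF ab'] by auto
    then show ?thesis using le by (intro S_downward[OF K ab']) auto
  next
    assume "a = b" "a \<le> diag_len K + e"
    moreover have "1 \<le> c" using cd by simp
    ultimately have "1 \<le> a - 1 \<and> a - 1 \<le> diag_len K" using that le e by linarith
    then have aa: "(a - 1, a - 1) \<in> K" using diag by blast
    have "(c, d - 1) \<in> shifted_staircase n" using cd that le K_stair[OF aa] \<open>a = b\<close> by auto
    then show ?thesis using le \<open>a = b\<close> that by (intro S_downward[OF K aa]) auto
  qed
  moreover have "c \<le> diag_len K + e" if "c = d"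
    using ab_cases
  proof (elim disjE conjE)
    assume ab': "a < b" "(a, b - 1) \<in> K"
    have "(c, c) \<in> shifted_staircase n" using cd le K_stair[OF ab'(2)] ab'(1) by auto
    then have "(c, c) \<in> K" using le ab'(1) by (intro S_downward[OF K ab'(2)]) auto
    then show ?thesis using diag by simp
  qed (use le in simp)
  ultimately show "(c, d) \<in> extend K e" using cd mem_extend[OF K] by (cases "c < d") auto
qed

lemma diag_len_extend:
  assumes "K \<in> S n"
  shows "diag_len (extend K e) = diag_len K + e"
proof -
  have "{i. (i, i) \<in> extend K e} = {1..diag_len K + e}" by (auto simp: mem_extend[OF assms])
  then show ?thesis by (simp add: diag_len_def[of "extend K e"])
qed

lemma unshift_extend: "K \<in> S n \<Longrightarrow> unshift (extend K e) = K"
  using S_subset[of K n] by (force simp: unshift_def mem_extend)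

lemma unshift_S:
  assumes I: "I \<in> S (Suc n)"
  shows "unshift I \<in> S n"
proof (rule S_intro)
  show "unshift I \<subseteq> shifted_staircase n" using S_subset[OF I] by (force simp: unshift_def)
  fix a b c d assume "(a, b) \<in> unshift I" "(c, d) \<in> shifted_staircase n" "c \<le> a" "d \<le> b"
  then show "(c, d) \<in> unshift I"
    using S_downward[OF I, of a "Suc b" c "Suc d"] by (auto simp: unshift_def)
qed

lemma diag_len_unshift:
  assumes I: "I \<in> S (Suc n)"
  shows "diag_len (unshift I) \<le> diag_len I" "diag_len I \<le> Suc (diag_len (unshift I))"
proof -
  note U = unshift_S[OF I]
  let ?u = "diag_len (unshift I)" and ?d = "diag_len I"
  show "?u \<le> ?d"
  proof (cases "?u = 0")
    case False
    then have "(?u, Suc ?u) \<in> I" using diag_mem_iff[OF U, of ?u] by (simp add: unshift_def)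
    then have "(?u, ?u) \<in> I"
      using S_downward[OF I, of ?u "Suc ?u" ?u ?u] diag_len_le[OF U] False by simp
    then show ?thesis using diag_mem_iff[OF I] by simp
  qed simp
  show "?d \<le> Suc ?u"
  proof (cases "?d \<le> 1")
    case False
    then have "(?d - 1, ?d) \<in> I"
      using diag_mem_iff[OF I, of ?d] S_downward[OF I, of ?d ?d "?d - 1" ?d] diag_len_le[OF I]
      by simp
    then have "(?d - 1, ?d - 1) \<in> unshift I" using False by (simp add: unshift_def)
    then have "?d - 1 \<le> ?u" using diag_mem_iff[OF U] by simp
    then show ?thesis by linarith
  qed simp
qed

lemma extend_unshift:
  assumes I: "I \<in> S (Suc n)"
  shows "extend (unshift I) (diag_len I - diag_len (unshift I)) = I"
proof -
  have len: "diag_len (unshift I) + (diag_len I - diag_len (unshift I)) = diag_len I"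
    using diag_len_unshift(1)[OF I] by simp
  have "(a, b) \<in> extend (unshift I) (diag_len I - diag_len (unshift I)) \<longleftrightarrow> (a, b) \<in> I" for a b
  proof (cases "a < b")
    case True
    then show ?thesis
      by (subst mem_extend[OF unshift_S[OF I]]) (auto simp: unshift_def)
  next
    case False
    then show ?thesis
      using S_subset[OF I] diag_mem_iff[OF I] by (force simp: mem_extend[OF unshift_S[OF I]] len)
  qed
  then show ?thesis by auto
qed

lemma bij_betw_extend: "bij_betw (\<lambda>(K, e). extend K e) (S n \<times> {0, 1}) (S (Suc n))"
proof (rule bij_betwI[where g = "\<lambda>I. (unshift I, diag_len I - diag_len (unshift I))"])
  show "(\<lambda>(K, e). extend K e) \<in> S n \<times> {0, 1} \<rightarrow> S (Suc n)" using extend_S by auto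
  show "(\<lambda>I. (unshift I, diag_len I - diag_len (unshift I))) \<in> S (Suc n) \<rightarrow> S n \<times> {0, 1}"
    using unshift_S diag_len_unshift by fastforce
qed (auto simp: unshift_extend diag_len_extend extend_unshift)

lemma card_sym_diff_atLeastAtMost:
  "int (card (sym_diff {1..a::nat} {1..b})) = \<bar>int a - int b\<bar>"
proof (cases "a \<le> b")
  case True
  then have "sym_diff {1..a} {1..b} = {a<..b}" by auto
  then show ?thesis using True by simp
next
  case False
  then have "sym_diff {1..a} {1..b} = {b<..a}" by auto
  then show ?thesis using False by simp
qed

lemma card_sym_diff_extend:
  assumes K: "K \<in> S n" and K': "K' \<in> S n"
  shows "int (card (sym_diff (extend K e) (extend K' e'))) =
    int (card (sym_diff K K')) + \<bar>int (diag_len K + e) - int (diag_len K' + e')\<bar>"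
proof -
  let ?f = "\<lambda>(i::nat, j::nat). (i, Suc j)" and ?g = "\<lambda>i::nat. (i, i)"
  let ?m = "diag_len K + e" and ?m' = "diag_len K' + e'"
  let ?A = "sym_diff (shift K) (shift K')" and ?B = "sym_diff (diag_segment ?m) (diag_segment ?m')"
  have "inj ?f" "inj ?g" by (auto simp: inj_def)
  then have A: "?A = ?f ` sym_diff K K'" and B: "?B = ?g ` sym_diff {1..?m} {1..?m'}"
    by (simp_all add: shift_def diag_segment_def image_Un image_set_diff)
  have "finite (sym_diff K K')"
    using finite_subset[OF S_subset finite_shifted_staircase] K K' by blast
  then have "card ?A = card (sym_diff K K')" and "card ?B = card (sym_diff {1..?m} {1..?m'})"
    unfolding A B using \<open>inj ?f\<close> \<open>inj ?g\<close> by (simp_all add: card_image inj_on_subset)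
  moreover have "sym_diff (extend K e) (extend K' e') = ?A \<union> ?B" and "?A \<inter> ?B = {}"
    using S_subset[OF K] S_subset[OF K'] by (auto simp: extend_def shift_def diag_segment_def)
  moreover have "finite ?A" "finite ?B"
    using \<open>finite (sym_diff K K')\<close> by (simp_all add: A B)
  ultimately show ?thesis
    using card_sym_diff_atLeastAtMost[of ?m ?m'] by (simp add: card_Un_disjoint)
qed

lemma sum_S_Suc: "(\<Sum>I\<in>S (Suc n). g I) = (\<Sum>K\<in>S n. g (extend K 0) + g (extend K 1))"
proof -
  have "(\<Sum>I\<in>S (Suc n). g I) = (\<Sum>x\<in>S n \<times> {0, 1}. g ((\<lambda>(K, e). extend K e) x))"
    by (rule sum.reindex_bij_betw[OF bij_betw_extend, symmetric])
  also have "\<dots> = (\<Sum>K\<in>S n. \<Sum>e\<in>{0, 1}. g (extend K e))"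
    by (subst sum.cartesian_product) (simp add: case_prod_beta)
  also have "\<dots> = (\<Sum>K\<in>S n. g (extend K 0) + g (extend K 1))" by simp
  finally show ?thesis .
qed

section \<open>Counting distances\<close>

lemma sum_pairs_S_Suc:
  "(\<Sum>I\<in>S (Suc n). \<Sum>J\<in>S (Suc n). h I J) =
    (\<Sum>K\<in>S n. \<Sum>K'\<in>S n. h (extend K 0) (extend K' 0) + h (extend K 0) (extend K' 1)
                          + h (extend K 1) (extend K' 0) + h (extend K 1) (extend K' 1))"
  by (simp add: sum_S_Suc sum.distrib ac_simps)

definition sym_diff_total :: "nat \<Rightarrow> int" where
  "sym_diff_total n = (\<Sum>I\<in>S n. \<Sum>J\<in>S n. int (card (sym_diff I J)))"

definition diag_gap_total :: "nat \<Rightarrow> int" where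
  "diag_gap_total n = (\<Sum>I\<in>S n. \<Sum>J\<in>S n. \<bar>int (diag_len I) - int (diag_len J)\<bar>)"

definition diag_gap_count :: "nat \<Rightarrow> int \<Rightarrow> int" where
  "diag_gap_count n d = (\<Sum>I\<in>S n. \<Sum>J\<in>S n. of_bool (int (diag_len I) - int (diag_len J) = d))"

lemma abs_neighbours_sum: "\<bar>d\<bar> + \<bar>d - 1\<bar> + \<bar>d + 1\<bar> + \<bar>d\<bar> = 4 * \<bar>d\<bar> + 2 * of_bool (d = 0)"
  for d :: int
  by auto

lemma sym_diff_total_Suc:
  "sym_diff_total (Suc n) = 4 * sym_diff_total n + 4 * diag_gap_total n + 2 * diag_gap_count n 0"
proof -
  have "sym_diff_total (Suc n) = (\<Sum>K\<in>S n. \<Sum>K'\<in>S n. 4 * int (card (sym_diff K K'))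
      + 4 * \<bar>int (diag_len K) - int (diag_len K')\<bar>
      + 2 * of_bool (int (diag_len K) - int (diag_len K') = 0))"
    unfolding sym_diff_total_def sum_pairs_S_Suc
    using abs_neighbours_sum[of "int (diag_len _) - int (diag_len _)"]
    by (intro sum.cong refl) (simp add: card_sym_diff_extend algebra_simps)
  also have "\<dots> = 4 * sym_diff_total n + 4 * diag_gap_total n + 2 * diag_gap_count n 0"
    by (simp add: sym_diff_total_def diag_gap_total_def diag_gap_count_def
        sum.distrib sum_distrib_left)
  finally show ?thesis .
qed

lemma diag_gap_total_Suc: "diag_gap_total (Suc n) = 4 * diag_gap_total n + 2 * diag_gap_count n 0"
proof -
  have "diag_gap_total (Suc n) = (\<Sum>K\<in>S n. \<Sum>K'\<in>S n.
      4 * \<bar>int (diag_len K) - int (diag_len K')\<bar>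
      + 2 * of_bool (int (diag_len K) - int (diag_len K') = 0))"
    unfolding diag_gap_total_def sum_pairs_S_Suc
    using abs_neighbours_sum[of "int (diag_len _) - int (diag_len _)"]
    by (intro sum.cong refl) (simp add: diag_len_extend algebra_simps)
  also have "\<dots> = 4 * diag_gap_total n + 2 * diag_gap_count n 0"
    by (simp add: diag_gap_total_def diag_gap_count_def sum.distrib sum_distrib_left)
  finally show ?thesis .
qed

lemma diag_gap_count_Suc:
  "diag_gap_count (Suc n) d =
    2 * diag_gap_count n d + diag_gap_count n (d - 1) + diag_gap_count n (d + 1)"
proof -
  have "diag_gap_count (Suc n) d = (\<Sum>K\<in>S n. \<Sum>K'\<in>S n.
      2 * of_bool (int (diag_len K) - int (diag_len K') = d)
      + of_bool (int (diag_len K) - int (diag_len K') = d - 1)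
      + of_bool (int (diag_len K) - int (diag_len K') = d + 1))"
    unfolding diag_gap_count_def sum_pairs_S_Suc
    by (intro sum.cong refl) (auto simp: diag_len_extend)
  also have "\<dots> = 2 * diag_gap_count n d + diag_gap_count n (d - 1) + diag_gap_count n (d + 1)"
    by (simp add: diag_gap_count_def sum.distrib sum_distrib_left)
  finally show ?thesis .
qed

definition int_choose :: "nat \<Rightarrow> int \<Rightarrow> int" where
  "int_choose m k = (if k < 0 then 0 else int (m choose nat k))"

lemma int_choose_Suc_Suc:
  "int_choose (Suc (Suc m)) (k + 1) =
    int_choose m (k - 1) + 2 * int_choose m k + int_choose m (k + 1)"
proof (cases "k < 0")
  case True
  then consider "k = -1" | "k < -1" by linarith
  then show ?thesis by cases (simp_all add: int_choose_def)
next
  case False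
  then obtain j where k: "k = int j" by (metis nonneg_int_cases not_less)
  show ?thesis
  proof (cases j)
    case 0
    then show ?thesis using k by (simp add: int_choose_def)
  next
    case (Suc i)
    then have "nat (k + 1) = Suc (Suc i)" "nat k = Suc i" "nat (k - 1) = i" using k by auto
    then show ?thesis using k Suc by (simp add: int_choose_def)
  qed
qed

lemma diag_gap_count_eq: "diag_gap_count n d = int_choose (2 * n) (int n + d)"
proof (induction n arbitrary: d)
  case 0
  show ?case by (simp add: diag_gap_count_def int_choose_def S_0 diag_len_def)
next
  case (Suc n)
  have "diag_gap_count (Suc n) d = int_choose (2 * n) (int n + d - 1)
      + 2 * int_choose (2 * n) (int n + d) + int_choose (2 * n) (int n + d + 1)"
    by (simp add: diag_gap_count_Suc Suc.IH algebra_simps)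
  also have "\<dots> = int_choose (2 * Suc n) (int (Suc n) + d)"
    using int_choose_Suc_Suc[of "2 * n" "int n + d"] by (simp add: algebra_simps)
  finally show ?case .
qed

lemma diag_gap_count_0: "diag_gap_count n 0 = int (2 * n choose n)"
  by (simp add: diag_gap_count_eq int_choose_def)

lemma Suc_times_central_binomial:
  "Suc n * (2 * Suc n choose Suc n) = 2 * (2 * n + 1) * (2 * n choose n)"
proof -
  have sym: "Suc (2 * n) choose n = Suc (2 * n) choose Suc n"
    using binomial_symmetric[of "Suc n" "Suc (2 * n)"] by simp
  have "Suc n * (2 * Suc n choose Suc n) = Suc (Suc (2 * n)) * (Suc (2 * n) choose n)"
    using Suc_times_binomial[of n "Suc (2 * n)"] by simp
  also have "\<dots> = 2 * (Suc n * (Suc (2 * n) choose Suc n))" using sym by simp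
  also have "\<dots> = 2 * (Suc (2 * n) * (2 * n choose n))"
    using Suc_times_binomial[of n "2 * n"] by simp
  finally show ?thesis by simp
qed

lemma diag_gap_total_eq: "diag_gap_total n = int n * int (2 * n choose n)"
proof (induction n)
  case 0
  show ?case by (simp add: diag_gap_total_def S_0)
next
  case (Suc n)
  have "diag_gap_total (Suc n) = 2 * (2 * int n + 1) * int (2 * n choose n)"
    by (simp add: diag_gap_total_Suc diag_gap_count_0 Suc.IH algebra_simps)
  also have "\<dots> = int (Suc n * (2 * Suc n choose Suc n))"
    by (simp only: Suc_times_central_binomial) (simp add: algebra_simps)
  finally show ?case by (simp only: of_nat_mult)
qed

lemma sym_diff_total_eq: "3 * sym_diff_total n = int n * (2 * int n + 1) * int (2 * n choose n)"
proof (induction n)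
  case 0
  show ?case by (simp add: sym_diff_total_def S_0)
next
  case (Suc n)
  have "3 * sym_diff_total (Suc n) =
      4 * (3 * sym_diff_total n) + 12 * diag_gap_total n + 6 * diag_gap_count n 0"
    by (simp add: sym_diff_total_Suc)
  also have "\<dots> = (2 * int n + 3) * (2 * (2 * int n + 1) * int (2 * n choose n))"
    unfolding Suc.IH diag_gap_total_eq diag_gap_count_0 by (simp add: algebra_simps)
  also have "\<dots> = (2 * int n + 3) * int (Suc n * (2 * Suc n choose Suc n))"
    by (simp only: Suc_times_central_binomial) (simp add: algebra_simps)
  finally show ?case by (simp add: algebra_simps)
qed

lemma wiener_S: "int (wiener (S n) (\<subseteq>)) = sym_diff_total n"
  using wiener_ideals[OF finite_shifted_staircase, of n]
  by (simp add: sym_diff_total_def S_def)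

lemma wiener_S_closed_form:
  "real (wiener (S n) (\<subseteq>)) = real n * (2 * real n + 1) * real (2 * n choose n) / 3"
proof -
  have "real_of_int (3 * sym_diff_total n) =
      real_of_int (int n * (2 * int n + 1) * int (2 * n choose n))"
    by (simp only: sym_diff_total_eq)
  then show ?thesis by (simp add: wiener_S[symmetric])
qed

section \<open>Asymptotics\<close>

lemma central_binomial_eq_twice: "0 < n \<Longrightarrow> 2 * n choose n = 2 * (2 * n - 1 choose n)"
proof -
  assume "0 < n"
  then obtain m where n: "n = Suc m" by (cases n) auto
  have "2 * n - 1 choose m = 2 * n - 1 choose n"
    using binomial_symmetric[of m "2 * n - 1"] n by simp
  moreover have "2 * n choose n = (2 * n - 1 choose m) + (2 * n - 1 choose n)"
    using n by simp
  ultimately show ?thesis by simp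
qed

lemma gbinomial_minus_half: "(-1/2 :: real) gchoose n = (-1) ^ n * real (2 * n choose n) / 4 ^ n"
proof (induction n)
  case 0
  show ?case by simp
next
  case (Suc n)
  have rec: "real (Suc n) * ((-1/2 :: real) gchoose Suc n) = (-1/2 - real n) * ((-1/2) gchoose n)"
    using gbinomial_mult_1[of "-1/2 :: real" n] by (simp add: algebra_simps)
  have cb: "real (Suc n) * real (2 * Suc n choose Suc n) =
      2 * (2 * real n + 1) * real (2 * n choose n)"
    by (simp only: of_nat_mult[symmetric] Suc_times_central_binomial) (simp add: algebra_simps)
  have "real (Suc n) * ((-1/2 :: real) gchoose Suc n)
      = (-1) ^ Suc n * (2 * (2 * real n + 1) * real (2 * n choose n)) / 4 ^ Suc n"
    unfolding rec Suc.IH by (simp add: field_simps)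
  also have "\<dots> = real (Suc n) * ((-1) ^ Suc n * real (2 * Suc n choose Suc n) / 4 ^ Suc n)"
    by (simp only: cb[symmetric]) (simp del: binomial_Suc_Suc)
  finally show ?case by (subst (asm) mult_left_cancel) simp_all
qed

lemma central_binomial_asymp:
  "(\<lambda>n. real (2 * n choose n) * sqrt (real n) / 4 ^ n) \<longlonglongrightarrow> 1 / sqrt pi"
proof -
  have "(\<lambda>n. ((-1/2 :: real) gchoose n) / ((-1) ^ n / exp ((-1/2 + 1) * ln (real n))))
      \<longlonglongrightarrow> inverse (Gamma (- (-1/2 :: real)))"
    using gbinomial_asymptotic[where z = "-1/2 :: real"] by simp
  moreover have "inverse (Gamma (- (-1/2 :: real))) = 1 / sqrt pi"
    using Gamma_one_half_real by (simp add: inverse_eq_divide)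
  moreover have "((-1/2 :: real) gchoose n) / ((-1) ^ n / exp ((-1/2 + 1) * ln (real n)))
      = real (2 * n choose n) * sqrt (real n) / 4 ^ n" if "0 < n" for n :: nat
  proof -
    have "exp ((-1/2 + 1) * ln (real n)) = exp (ln (sqrt (real n)))"
      using that by (simp add: ln_sqrt)
    then have "exp ((-1/2 + 1) * ln (real n)) = sqrt (real n)" using that by simp
    then show ?thesis unfolding gbinomial_minus_half by (simp add: field_simps)
  qed
  ultimately show ?thesis
    by (auto intro: Lim_transform_eventually eventually_mono[OF eventually_gt_at_top[of 0]])
qed

lemma wiener_S_asymp_equiv:
  "(\<lambda>n. real (wiener (S n) (\<subseteq>))) \<sim>[at_top] (\<lambda>n. 2 / (3 * sqrt pi) * 4 ^ n * real n powr (3 / 2))"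
proof (rule asymp_equivI')
  let ?c = "\<lambda>n. real (2 * n choose n) * sqrt (real n) / 4 ^ n"
    and ?g = "\<lambda>n. 2 / (3 * sqrt pi) * 4 ^ n * real n powr (3 / 2)"
  have "(\<lambda>n. (1 + 1/2 * (1 / real n)) * sqrt pi * ?c n) \<longlonglongrightarrow> (1 + 1/2 * 0) * sqrt pi * (1 / sqrt pi)"
    by (intro tendsto_intros lim_1_over_n central_binomial_asymp)
  then have lim: "(\<lambda>n. (1 + 1/2 * (1 / real n)) * sqrt pi * ?c n) \<longlonglongrightarrow> 1" by simp
  have "(1 + 1/2 * (1 / real n)) * sqrt pi * ?c n = real (wiener (S n) (\<subseteq>)) / ?g n"
    if "0 < n" for n
  proof -
    define x where "x = sqrt (real n)"
    have n: "real n = x * x" and x: "0 < x" using that by (simp_all add: x_def)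
    have "real n powr (3 / 2) = real n * x"
      using that powr_add[of "real n" 1 "1/2"] by (simp add: powr_half_sqrt x_def)
    then show ?thesis
      unfolding wiener_S_closed_form x_def[symmetric] unfolding n using x by (simp add: field_simps)
  qed
  with lim show "((\<lambda>n. real (wiener (S n) (\<subseteq>)) / ?g n) \<longlongrightarrow> 1) at_top"
    by (auto intro: Lim_transform_eventually eventually_mono[OF eventually_gt_at_top[of 0]])
qed

theorem corollary1p6:
  shows "(\<forall>n::nat. real (wiener (S n) (\<subseteq>)) =
            real (2 * n * (2 * n + 1)) / 3 * real ((2 * n - 1) choose n))
         \<and> (\<lambda>n::nat. real (wiener (S n) (\<subseteq>)))
             \<sim>[at_top] (\<lambda>n. 2 / (3 * sqrt pi) * 4 ^ n * real n powr (3 / 2))"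
proof (intro conjI allI wiener_S_asymp_equiv)
  fix n :: nat
  show "real (wiener (S n) (\<subseteq>)) = real (2 * n * (2 * n + 1)) / 3 * real ((2 * n - 1) choose n)"
  proof (cases "n = 0")
    case False
    then have "real (2 * n choose n) = 2 * real (2 * n - 1 choose n)"
      using central_binomial_eq_twice[of n] by simp
    then show ?thesis unfolding wiener_S_closed_form by (simp add: algebra_simps)
  qed (simp add: wiener_S_closed_form)
qed

end
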